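(* Let $r,m\ge0$ and $k\ge1$ be integers with $r+m\equiv1\pmod 2$, and let $n\ge0$. Then $$\lim_{q\to-1}\frac{\sum_{j=0}^{2n}q^{rj^2+mj}\begin{bmatrix} 2n\\ j\end{bmatrix}_{q^{2k}}}{(-q;q)_{2n}}=(k-r)^n,\qquad \lim_{q\to-1}\frac{\sum_{j=0}^{2n+1}q^{rj^2+mj}\begin{bmatrix} 2n+1\\ j\end{bmatrix}_{q^{2k}}}{(-q;q)_{2n+1}}=\big((2n+1)r+m\big)(k-r)^n.$$
   Context: $(x;q)_n=\prod_{j=0}^{n-1}(1-q^jx)$. The Gaussian binomial coefficient is $\begin{bmatrix} n\\ j\end{bmatrix}_q=\frac{(q;q)_n}{(q;q)_j(q;q)_{n-j}}$ for $0\le j\le n$, a polynomial in $q$; $\begin{bmatrix} n\\ j\end{bmatrix}_{q^{2k}}$ is this with $q$ replaced by $q^{2k}$. The quotients are rational functions of $q$ and the limits are taken as $q\to-1$. *)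

theory Defs
  imports Complex_Main
begin

definition qpoch :: "real \<Rightarrow> real \<Rightarrow> nat \<Rightarrow> real" where
  "qpoch x q n = (\<Prod>j<n. 1 - q ^ j * x)"

definition gauss_binom :: "real \<Rightarrow> nat \<Rightarrow> nat \<Rightarrow> real" where
  "gauss_binom q n j = qpoch q q n / (qpoch q q j * qpoch q q (n - j))"

end

theory Submission
  imports Defs "HOL-Computational_Algebra.Polynomial_FPS"
begin

unbundle fps_syntax

text \<open>
  Put \<open>q = -(1 + t)\<close>. Since \<open>r + m\<close> is odd,
  \<open>q ^ (r j\<^sup>2 + m j) = (-1) ^ j (1 + t) ^ (r j\<^sup>2 + m j)\<close>, so the numerator is a
  polynomial \<open>S\<^sub>N(t)\<close>, while \<open>(-q; q)\<^sub>N = t ^ c B\<^sub>N(t)\<close> with \<open>c = \<lceil>N/2\<rceil>\<close> and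
  \<open>B\<^sub>N(0) \<noteq> 0\<close>. The limit is therefore the coefficient of \<open>t ^ c\<close> in \<open>S\<^sub>N\<close>
  divided by \<open>B\<^sub>N(0)\<close>.

  To find that coefficient, replace \<open>m\<close> by a parameter \<open>a\<close>, so that the
  coefficient of \<open>t ^ i\<close> in \<open>S\<^sub>N(a)\<close> is a polynomial in \<open>a\<close>. The q-Pascal rule
  gives \<open>S\<^sub>N\<^sub>+\<^sub>1(a) = S\<^sub>N(a + 2k) - (1 + t) ^ (r + a) S\<^sub>N(a + 2r)\<close>; by induction
  the coefficient of \<open>t ^ i\<close> has degree at most \<open>2i - N\<close> in \<open>a\<close> and vanishes
  for \<open>2i < N\<close>, and its coefficient of \<open>a ^ (2i - N)\<close> obeys a two-term
  recurrence with an explicit factorial solution. For \<open>N = 2n\<close> the coefficient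
  of \<open>t ^ n\<close> is that constant. For \<open>N = 2n + 1\<close> the coefficient of
  \<open>t ^ (n + 1)\<close> is linear in \<open>a\<close> with known slope, and the symmetry
  \<open>j \<mapsto> N - j\<close>, which reads \<open>S\<^sub>N(a) = -(1 + t) ^ (r N\<^sup>2 + a N) S\<^sub>N(-2rN - a)\<close>,
  places its root at \<open>a = -rN\<close>.
\<close>

lemma poly_eqI_on_infinite:
  fixes p q :: "'a::idom poly"
  assumes "infinite S" "\<And>x. x \<in> S \<Longrightarrow> poly p x = poly q x"
  shows "p = q"
proof (rule ccontr)
  assume "p \<noteq> q"
  then have "finite {x. poly (p - q) x = 0}"
    by (intro poly_roots_finite) simp
  moreover have "S \<subseteq> {x. poly (p - q) x = 0}"
    using assms(2) by auto
  ultimately show False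
    using assms(1) finite_subset by blast
qed

lemma coeff_pcompose_shift_eq:
  fixes p :: "'a::idom poly"
  assumes "degree p \<le> d"
  shows "coeff (pcompose p [:h, 1:]) d = coeff p d"
  using assms
proof (induction p arbitrary: d rule: pCons_induct)
  case (pCons c p)
  show ?case
  proof (cases d)
    case 0
    with pCons have "p = 0"
      by (auto simp: degree_pCons_eq_if split: if_splits)
    with 0 show ?thesis by simp
  next
    case (Suc d')
    have "degree p \<le> d'"
      using pCons.prems Suc by (auto simp: degree_pCons_eq_if split: if_splits)
    moreover from this have "coeff (pcompose p [:h, 1:]) (Suc d') = 0"
      by (intro coeff_eq_0) (simp add: degree_pcompose)
    ultimately show ?thesis
      using Suc pCons.IH by (simp add: pcompose_pCons coeff_pCons)
  qed
qed simp

lemma coeff_pcompose_shift_pred: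
  fixes p :: "'a::idom poly"
  assumes "degree p \<le> Suc d"
  shows "coeff (pcompose p [:h, 1:]) d = coeff p d + of_nat (Suc d) * h * coeff p (Suc d)"
  using assms
proof (induction p arbitrary: d rule: pCons_induct)
  case (pCons c p)
  have deg_p: "degree p \<le> d"
    using pCons.prems by (auto simp: degree_pCons_eq_if split: if_splits)
  show ?case
  proof (cases d)
    case 0
    then show ?thesis
      using coeff_pcompose_shift_eq[of p 0 h] deg_p by (simp add: pcompose_pCons)
  next
    case (Suc d')
    then show ?thesis
      using coeff_pcompose_shift_eq[of p d h] deg_p pCons.IH[of d']
      by (simp add: pcompose_pCons coeff_pCons algebra_simps)
  qed
qed simp

lemma coeff_mult_at_degree_bounds:
  fixes p q :: "'a::idom poly"
  assumes "degree p \<le> m" "degree q \<le> n"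
  shows "coeff (p * q) (m + n) = coeff p m * coeff q n"
proof (cases "degree p = m \<and> degree q = n")
  case True
  then show ?thesis
    using coeff_mult_degree_sum[of p q] by simp
next
  case False
  then have "degree (p * q) < m + n" "degree p < m \<or> degree q < n"
    using assms degree_mult_le[of p q] by auto
  then show ?thesis
    by (auto simp: coeff_eq_0)
qed

lemma degree_le_1_imp_eq_pCons: "degree p \<le> 1 \<Longrightarrow> p = [:coeff p 0, coeff p 1:]"
  by (rule poly_eqI) (auto simp: coeff_pCons coeff_eq_0 split: nat.split)

section \<open>Gaussian binomial coefficients\<close>

fun qbinomial :: "'a::comm_ring_1 \<Rightarrow> nat \<Rightarrow> nat \<Rightarrow> 'a" where
  "qbinomial b 0 j = (if j = 0 then 1 else 0)"
| "qbinomial b (Suc N) 0 = 1"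
| "qbinomial b (Suc N) (Suc j) = qbinomial b N j + b ^ Suc j * qbinomial b N (Suc j)"

lemma qbinomial_0_right [simp]: "qbinomial b N 0 = 1"
  by (cases N) auto

lemma qbinomial_eq_0: "N < j \<Longrightarrow> qbinomial b N j = 0"
  by (induction b N j rule: qbinomial.induct) auto

lemma qbinomial_diag [simp]: "qbinomial b N N = 1"
  by (induction N) (auto simp: qbinomial_eq_0)

lemma poly_qbinomial: "poly (qbinomial b N j) t = qbinomial (poly b t) N j"
  by (induction b N j rule: qbinomial.induct) simp_all

lemma fps_of_poly_qbinomial: "fps_of_poly (qbinomial b N j) = qbinomial (fps_of_poly b) N j"
  by (induction b N j rule: qbinomial.induct)
     (simp_all add: fps_of_poly_add fps_of_poly_mult fps_of_poly_power)

lemma qpoch_Suc: "qpoch x q (Suc n) = qpoch x q n * (1 - q ^ n * x)"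
  by (simp add: qpoch_def)

lemma qpoch_self_nonzero:
  fixes p :: real
  assumes "0 < p" "p \<noteq> 1"
  shows "qpoch p p n \<noteq> 0"
proof -
  have "p ^ Suc j \<noteq> 1" for j
    using assms by (metis abs_of_pos power_eq_1_iff real_norm_def Suc_neq_Zero)
  then show ?thesis
    by (simp add: qpoch_def mult.commute)
qed

lemma gauss_binom_Suc_Suc:
  fixes p :: real
  assumes p: "0 < p" "p \<noteq> 1" and j: "Suc j \<le> N"
  shows "gauss_binom p (Suc N) (Suc j) = gauss_binom p N j + p ^ Suc j * gauss_binom p N (Suc j)"
proof -
  define Q where "Q = qpoch p p"
  have Q_nz: "Q n \<noteq> 0" for n
    using qpoch_self_nonzero[OF p] by (simp add: Q_def)
  have Q_Suc: "Q (Suc n) = Q n * (1 - p ^ Suc n)" for n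
    by (simp add: Q_def qpoch_Suc mult.commute)
  have N_j: "N - j = Suc (N - Suc j)"
    using j by simp
  define a b where "a = 1 - p ^ Suc j" and "b = 1 - p ^ (N - j)"
  have ab: "a \<noteq> 0" "b \<noteq> 0"
    using Q_nz[of "Suc j"] Q_nz[of "N - j"] by (simp_all add: a_def b_def Q_Suc N_j)
  have split: "1 - p ^ Suc N = a + p ^ Suc j * b"
    using j by (simp add: a_def b_def algebra_simps power_add[symmetric])
  have "gauss_binom p (Suc N) (Suc j) = Q N * (1 - p ^ Suc N) / (Q j * a * (Q (N - Suc j) * b))"
    by (simp add: gauss_binom_def Q_def[symmetric] Q_Suc N_j a_def b_def)
  also have "\<dots> = Q N / (Q j * (Q (N - Suc j) * b)) + p ^ Suc j * (Q N / (Q j * a * Q (N - Suc j)))"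
    unfolding split using ab Q_nz by (simp add: field_simps)
  also have "\<dots> = gauss_binom p N j + p ^ Suc j * gauss_binom p N (Suc j)"
    by (simp add: gauss_binom_def Q_def[symmetric] Q_Suc N_j a_def b_def)
  finally show ?thesis .
qed

lemma gauss_binom_eq_qbinomial:
  fixes p :: real
  assumes p: "0 < p" "p \<noteq> 1" and "j \<le> N"
  shows "gauss_binom p N j = qbinomial p N j"
  using \<open>j \<le> N\<close>
proof (induction N arbitrary: j)
  case 0
  then show ?case by (simp add: gauss_binom_def qpoch_def)
next
  case (Suc N)
  show ?case
  proof (cases j)
    case 0
    then show ?thesis
      using qpoch_self_nonzero[OF p, of "Suc N"] by (simp add: gauss_binom_def qpoch_def)
  next
    case (Suc i)
    show ?thesis
    proof (cases "i = N")
      case True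
      then show ?thesis
        using Suc qpoch_self_nonzero[OF p, of "Suc N"] by (simp add: gauss_binom_def qpoch_def)
    next
      case False
      with Suc.prems Suc have "Suc i \<le> N" by simp
      then show ?thesis
        using Suc Suc.IH by (simp add: gauss_binom_Suc_Suc[OF p])
    qed
  qed
qed

lemma qbinomial_symmetric:
  fixes p :: real
  assumes "0 < p" "p \<noteq> 1" "j \<le> N"
  shows "qbinomial p N (N - j) = qbinomial p N j"
  using assms gauss_binom_eq_qbinomial[of p j N] gauss_binom_eq_qbinomial[of p "N - j" N]
  by (simp add: gauss_binom_def mult.commute)

lemma qbinomial_one_plus_X_power_symmetric:
  assumes "k \<ge> 1" "j \<le> N"
  shows "qbinomial ([:1, 1::real:] ^ (2 * k)) N (N - j) = qbinomial ([:1, 1:] ^ (2 * k)) N j"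
proof (rule poly_eqI_on_infinite[of "{0<..}"])
  fix t :: real
  assume "t \<in> {0<..}"
  then have "1 < (1 + t) ^ (2 * k)"
    using assms(1) by (intro one_less_power) auto
  then show "poly (qbinomial ([:1, 1:] ^ (2 * k)) N (N - j)) t
      = poly (qbinomial ([:1, 1:] ^ (2 * k)) N j) t"
    using assms(2) by (simp add: poly_qbinomial qbinomial_symmetric)
qed (rule infinite_Ioi)

lemma fps_binomial_of_nat_eq_fps_of_poly: "fps_binomial (of_nat n) = fps_of_poly ([:1, 1::real:] ^ n)"
  by (simp add: fps_binomial_of_nat fps_of_poly_power fps_of_poly_linear')

lemma qbinomial_fps_binomial_symmetric:
  assumes "k \<ge> 1" "j \<le> N"
  shows "qbinomial (fps_binomial (2 * real k)) N (N - j) = qbinomial (fps_binomial (2 * real k)) N j"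
  using fps_binomial_of_nat_eq_fps_of_poly[of "2 * k"] qbinomial_one_plus_X_power_symmetric[OF assms]
  by (simp add: fps_of_poly_qbinomial[symmetric])

section \<open>Power series with polynomial coefficients\<close>

definition eval_coeffs :: "'a::comm_semiring_1 \<Rightarrow> 'a poly fps \<Rightarrow> 'a fps" where
  "eval_coeffs a F = Abs_fps (\<lambda>i. poly (F $ i) a)"

lemma eval_coeffs_nth [simp]: "eval_coeffs a F $ i = poly (F $ i) a"
  by (simp add: eval_coeffs_def)

lemma eval_coeffs_0 [simp]: "eval_coeffs a 0 = 0"
  and eval_coeffs_1 [simp]: "eval_coeffs a 1 = 1"
  and eval_coeffs_add [simp]: "eval_coeffs a (F + G) = eval_coeffs a F + eval_coeffs a G"
  and eval_coeffs_mult [simp]: "eval_coeffs a (F * G) = eval_coeffs a F * eval_coeffs a G"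
  by (simp_all add: fps_eq_iff fps_mult_nth poly_sum)

lemma eval_coeffs_uminus [simp]: "eval_coeffs a (- F) = - eval_coeffs (a::'a::comm_ring_1) F"
  and eval_coeffs_diff [simp]: "eval_coeffs a (F - G) = eval_coeffs a F - eval_coeffs a G"
  by (simp_all add: fps_eq_iff)

lemma eval_coeffs_sum [simp]: "eval_coeffs a (sum f S) = (\<Sum>x\<in>S. eval_coeffs a (f x))"
  by (induction S rule: infinite_finite_induct) auto

lemma eval_coeffs_power [simp]: "eval_coeffs a (F ^ n) = eval_coeffs a F ^ n"
  by (induction n) auto

lemma eval_coeffs_inject:
  fixes F G :: "'a::{idom,ring_char_0} poly fps"
  assumes "\<And>a. eval_coeffs a F = eval_coeffs a G"
  shows "F = G"
proof (rule fps_ext)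
  fix i
  have "poly (F $ i) a = poly (G $ i) a" for a
    using assms[of a] by (metis eval_coeffs_nth)
  then show "F $ i = G $ i"
    by (simp add: poly_eq_poly_eq_iff[symmetric] fun_eq_iff)
qed

definition binomial_series :: "'a::field_char_0 poly \<Rightarrow> 'a poly fps" where
  "binomial_series p = Abs_fps (\<lambda>l. smult (1 / fact l) (\<Prod>s<l. p - [:of_nat s:]))"

lemma binomial_series_nth:
  "binomial_series p $ l = smult (1 / fact l) (\<Prod>s<l. p - [:of_nat s:])"
  by (simp add: binomial_series_def)

lemma binomial_series_nth_0 [simp]: "binomial_series p $ 0 = 1"
  and binomial_series_nth_Suc_0 [simp]: "binomial_series p $ Suc 0 = p"
  by (simp_all add: binomial_series_nth)

lemma degree_binomial_series_nth:
  assumes "degree p \<le> 1"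
  shows "degree (binomial_series p $ l) \<le> l"
proof -
  have "degree (binomial_series p $ l) \<le> (\<Sum>s<l. degree (p - [:of_nat s:]))"
    using degree_prod_sum_le[of "{..<l}" "\<lambda>s. p - [:of_nat s:]"]
    by (simp add: binomial_series_nth degree_smult_le o_def)
  also have "\<dots> \<le> (\<Sum>s<l. 1)"
    by (rule sum_mono) (use assms in \<open>simp add: degree_diff_le\<close>)
  finally show ?thesis by simp
qed

lemma eval_binomial_series [simp]: "eval_coeffs a (binomial_series p) = fps_binomial (poly p a)"
  by (simp add: fps_eq_iff binomial_series_nth gbinomial_prod_rev poly_prod atLeast0LessThan)

definition const_coeffs :: "'a::zero fps \<Rightarrow> 'a poly fps" where
  "const_coeffs F = Abs_fps (\<lambda>i. [:F $ i:])"

lemma eval_const_coeffs [simp]: "eval_coeffs a (const_coeffs F) = F"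
  by (simp add: fps_eq_iff const_coeffs_def)

definition shift_coeffs :: "'a::comm_semiring_1 \<Rightarrow> 'a poly fps \<Rightarrow> 'a poly fps" where
  "shift_coeffs h F = Abs_fps (\<lambda>i. pcompose (F $ i) [:h, 1:])"

lemma eval_shift_coeffs [simp]: "eval_coeffs a (shift_coeffs h F) = eval_coeffs (h + a) F"
  by (simp add: fps_eq_iff shift_coeffs_def poly_pcompose)

definition reflect_coeffs :: "'a::comm_ring_1 \<Rightarrow> 'a poly fps \<Rightarrow> 'a poly fps" where
  "reflect_coeffs c F = Abs_fps (\<lambda>i. pcompose (F $ i) [:c, -1:])"

lemma eval_reflect_coeffs [simp]: "eval_coeffs a (reflect_coeffs c F) = eval_coeffs (c - a) F"
  by (simp add: fps_eq_iff reflect_coeffs_def poly_pcompose)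

section \<open>Weight and top part\<close>

definition has_weight :: "nat \<Rightarrow> 'a::zero poly fps \<Rightarrow> bool" where
  "has_weight w F \<longleftrightarrow> (\<forall>i. F $ i \<noteq> 0 \<longrightarrow> w + degree (F $ i) \<le> 2 * i)"

lemma has_weightD: "has_weight w F \<Longrightarrow> F $ i \<noteq> 0 \<Longrightarrow> w + degree (F $ i) \<le> 2 * i"
  by (simp add: has_weight_def)

lemma has_weight_nth_eq_0: "has_weight w F \<Longrightarrow> 2 * i < w \<Longrightarrow> F $ i = 0"
  using has_weightD by fastforce

lemma has_weight_degree: "has_weight w F \<Longrightarrow> degree (F $ i) \<le> 2 * i - w"
  by (cases "F $ i = 0") (auto dest: has_weightD[of w F i])

lemma has_weightI:
  "(\<And>i. F $ i \<noteq> 0 \<Longrightarrow> w \<le> 2 * i \<and> degree (F $ i) \<le> 2 * i - w) \<Longrightarrow> has_weight w F"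
  unfolding has_weight_def by force

lemma has_weight_one: "has_weight 0 (1 :: 'a::comm_semiring_1 poly fps)"
  by (rule has_weightI) (auto split: if_splits)

lemma has_weight_add:
  fixes F G :: "'a::comm_ring_1 poly fps"
  assumes F: "has_weight w F" and G: "has_weight w G"
  shows "has_weight w (F + G)"
proof (rule has_weightI)
  fix i
  assume "(F + G) $ i \<noteq> 0"
  then have "F $ i \<noteq> 0 \<or> G $ i \<noteq> 0" by auto
  then have "w \<le> 2 * i"
    using has_weightD[OF F, of i] has_weightD[OF G, of i] by auto
  moreover have "degree ((F + G) $ i) \<le> 2 * i - w"
    using has_weight_degree[OF F, of i] has_weight_degree[OF G, of i] degree_add_le by simp
  ultimately show "w \<le> 2 * i \<and> degree ((F + G) $ i) \<le> 2 * i - w" by simp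
qed

lemma has_weight_mult:
  fixes F G :: "'a::comm_ring_1 poly fps"
  assumes F: "has_weight w F" and G: "has_weight v G"
  shows "has_weight (w + v) (F * G)"
proof (rule has_weightI)
  fix i
  assume nz: "(F * G) $ i \<noteq> 0"
  have term_bound: "w + v \<le> 2 * i \<and> degree (F $ l * G $ (i - l)) \<le> 2 * i - (w + v)"
    if "l \<le> i" "F $ l * G $ (i - l) \<noteq> 0" for l
  proof -
    have "F $ l \<noteq> 0" "G $ (i - l) \<noteq> 0"
      using that(2) by auto
    then have "w + degree (F $ l) \<le> 2 * l" "v + degree (G $ (i - l)) \<le> 2 * (i - l)"
      using has_weightD[OF F, of l] has_weightD[OF G, of "i - l"] by auto
    then show ?thesis
      using degree_mult_le[of "F $ l" "G $ (i - l)"] that by auto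
  qed
  have eq: "(F * G) $ i = (\<Sum>l=0..i. F $ l * G $ (i - l))"
    by (simp add: fps_mult_nth)
  obtain l where "l \<in> {0..i}" "F $ l * G $ (i - l) \<noteq> 0"
    using nz unfolding eq by (meson sum.neutral)
  then have "w + v \<le> 2 * i"
    using term_bound[of l] by simp
  moreover have "degree ((F * G) $ i) \<le> 2 * i - (w + v)"
    unfolding eq
  proof (rule degree_sum_le)
    fix l
    assume "l \<in> {0..i}"
    then show "degree (F $ l * G $ (i - l)) \<le> 2 * i - (w + v)"
      using term_bound[of l] by (cases "F $ l * G $ (i - l) = 0") auto
  qed simp
  ultimately show "w + v \<le> 2 * i \<and> degree ((F * G) $ i) \<le> 2 * i - (w + v)" by simp
qed

lemma has_weight_shift_coeffs:
  fixes F :: "'a::idom poly fps"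
  assumes "has_weight w F"
  shows "has_weight w (shift_coeffs h F)"
proof (rule has_weightI)
  fix i
  assume "shift_coeffs h F $ i \<noteq> 0"
  then have "F $ i \<noteq> 0"
    by (auto simp: shift_coeffs_def)
  then show "w \<le> 2 * i \<and> degree (shift_coeffs h F $ i) \<le> 2 * i - w"
    using has_weightD[OF assms, of i] by (simp add: shift_coeffs_def degree_pcompose)
qed

lemma has_weight_shift_coeffs_diff:
  fixes F :: "'a::idom poly fps"
  assumes F: "has_weight w F"
  shows "has_weight (Suc w) (shift_coeffs h F - shift_coeffs h' F)"
proof (rule has_weightI)
  fix i
  define D where "D = pcompose (F $ i) [:h, 1:] - pcompose (F $ i) [:h', 1:]"
  assume "(shift_coeffs h F - shift_coeffs h' F) $ i \<noteq> 0"
  then have "D \<noteq> 0"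
    by (simp add: D_def shift_coeffs_def)
  then have "F $ i \<noteq> 0"
    by (auto simp: D_def)
  have "degree D \<le> degree (F $ i)"
    unfolding D_def by (rule degree_diff_le) (simp_all add: degree_pcompose)
  moreover have "coeff D (degree (F $ i)) = 0"
    by (simp add: D_def coeff_pcompose_shift_eq)
  ultimately have "degree D < degree (F $ i)"
    using \<open>D \<noteq> 0\<close> by (metis le_neq_implies_less leading_coeff_0_iff)
  moreover have "w + degree (F $ i) \<le> 2 * i"
    using has_weightD[OF F \<open>F $ i \<noteq> 0\<close>] .
  ultimately show
    "Suc w \<le> 2 * i \<and> degree ((shift_coeffs h F - shift_coeffs h' F) $ i) \<le> 2 * i - Suc w"
    by (simp add: D_def shift_coeffs_def)
qed

lemma has_weight_one_minus_binomial_series: "has_weight 1 (1 - binomial_series [:c, 1:])"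
proof (rule has_weightI)
  fix i
  assume "(1 - binomial_series [:c, 1:]) $ i \<noteq> 0"
  then have "i \<noteq> 0"
    by (cases i) auto
  moreover have "degree (binomial_series [:c, 1:] $ i) \<le> i"
    by (rule degree_binomial_series_nth) simp
  ultimately show "1 \<le> 2 * i \<and> degree ((1 - binomial_series [:c, 1:]) $ i) \<le> 2 * i - 1"
    by simp
qed

definition top_part :: "nat \<Rightarrow> 'a::zero poly fps \<Rightarrow> 'a fps" where
  "top_part w F = Abs_fps (\<lambda>i. coeff (F $ i) (2 * i - w))"

lemma top_part_nth: "top_part w F $ i = coeff (F $ i) (2 * i - w)"
  by (simp add: top_part_def)

lemma top_part_add: "top_part w (F + G) = top_part w F + top_part w G"
  by (simp add: fps_eq_iff top_part_nth)

lemma top_part_mult: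
  fixes F G :: "'a::idom poly fps"
  assumes F: "has_weight w F" and G: "has_weight v G"
  shows "top_part (w + v) (F * G) = top_part w F * top_part v G"
proof (rule fps_ext)
  fix i
  have "coeff (F $ l * G $ (i - l)) (2 * i - (w + v))
      = coeff (F $ l) (2 * l - w) * coeff (G $ (i - l)) (2 * (i - l) - v)"
    if "l \<le> i" for l
  proof (cases "F $ l = 0 \<or> G $ (i - l) = 0")
    case False
    then have "w + degree (F $ l) \<le> 2 * l" "v + degree (G $ (i - l)) \<le> 2 * (i - l)"
      using has_weightD[OF F, of l] has_weightD[OF G, of "i - l"] by auto
    moreover from this have "2 * i - (w + v) = (2 * l - w) + (2 * (i - l) - v)"
      using that by auto
    ultimately show ?thesis
      using coeff_mult_at_degree_bounds[of "F $ l" "2 * l - w" "G $ (i - l)" "2 * (i - l) - v"]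
      by simp
  qed auto
  then show "top_part (w + v) (F * G) $ i = (top_part w F * top_part v G) $ i"
    by (simp add: top_part_nth fps_mult_nth coeff_sum)
qed

lemma top_part_shift_coeffs:
  fixes F :: "'a::idom poly fps"
  assumes "has_weight w F"
  shows "top_part w (shift_coeffs h F) = top_part w F"
  using has_weight_degree[OF assms]
  by (simp add: fps_eq_iff top_part_nth shift_coeffs_def coeff_pcompose_shift_eq)

lemma top_part_shift_coeffs_diff_nth:
  fixes F :: "'a::idom poly fps"
  assumes F: "has_weight w F"
  shows "top_part (Suc w) (shift_coeffs h F - shift_coeffs h' F) $ i
           = (h - h') * of_nat (2 * i - w) * top_part w F $ i"
proof (cases "F $ i = 0 \<or> 2 * i = w")
  case True
  then show ?thesis
  proof
    assume "2 * i = w"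
    then obtain c where "F $ i = [:c:]"
      using has_weight_degree[OF F, of i] by (metis degree_eq_zeroE diff_self_eq_0 le_zero_eq)
    with \<open>2 * i = w\<close> show ?thesis
      by (simp add: top_part_nth shift_coeffs_def)
  qed (simp add: top_part_nth shift_coeffs_def)
next
  case False
  then have "w + degree (F $ i) \<le> 2 * i" "2 * i \<noteq> w"
    using has_weightD[OF F] by auto
  define d where "d = 2 * i - Suc w"
  have d: "2 * i - w = Suc d" "degree (F $ i) \<le> Suc d"
    using \<open>w + degree (F $ i) \<le> 2 * i\<close> \<open>2 * i \<noteq> w\<close> by (auto simp: d_def)
  then show ?thesis
    by (simp add: d_def top_part_nth shift_coeffs_def coeff_pcompose_shift_pred algebra_simps)
qed

lemma top_part_one_minus_binomial_series: "top_part 1 (1 - binomial_series [:c, 1:]) = - fps_X"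
proof (rule fps_ext)
  fix i
  show "top_part 1 (1 - binomial_series [:c, 1:]) $ i = (- fps_X) $ i"
  proof (cases "i \<le> 1")
    case True
    then have "i = 0 \<or> i = 1" by auto
    then show ?thesis by (auto simp: top_part_nth)
  next
    case False
    then have "degree (binomial_series [:c, 1:] $ i) < 2 * i - 1"
      using degree_binomial_series_nth[of "[:c, 1:]" i] by simp
    then show ?thesis
      using False by (simp add: top_part_nth coeff_eq_0)
  qed
qed

definition top_coeff :: "real \<Rightarrow> nat \<Rightarrow> nat \<Rightarrow> real" where
  "top_coeff h N i = (if N \<le> 2 * i \<and> i \<le> N
     then (-1) ^ i * h ^ (N - i) * fact N / (fact (2 * i - N) * fact (N - i)) else 0)"

lemma top_coeff_0: "top_coeff h 0 i = (if i = 0 then 1 else 0)"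
  by (simp add: top_coeff_def)

lemma top_coeff_Suc:
  "top_coeff h (Suc N) i
     = 2 * h * of_nat (2 * i - N) * top_coeff h N i - (if i = 0 then 0 else top_coeff h N (i - 1))"
proof (cases "Suc N \<le> 2 * i \<and> i \<le> Suc N")
  case False
  then show ?thesis
    by (auto simp: top_coeff_def)
next
  case True
  define s u where "s = 2 * i - Suc N" and "u = Suc N - i"
  with True have su: "i = s + u" "Suc N = s + 2 * u"
    by auto
  consider "u = 0" | "s = 0" "u > 0" | "s > 0" "u > 0"
    by auto
  then show ?thesis
  proof cases
    case 1
    with su have "i = Suc N"
      by simp
    then show ?thesis
      by (simp add: top_coeff_def flip: of_nat_Suc)
  next
    case 2
    then obtain u' where "u = Suc u'"
      using gr0_implies_Suc by blast
    with 2 su show ?thesis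
      by (simp add: top_coeff_def fact_Suc divide_simps)
  next
    case 3
    then obtain s' u' where "s = Suc s'" "u = Suc u'"
      using gr0_implies_Suc by blast
    with su show ?thesis
      by (simp add: top_coeff_def fact_Suc divide_simps) (simp add: algebra_simps)
  qed
qed

section \<open>The numerator as a power series\<close>

definition qsum :: "nat \<Rightarrow> nat \<Rightarrow> nat \<Rightarrow> real \<Rightarrow> real fps" where
  "qsum r k N a = (\<Sum>j=0..N. (-1) ^ j * fps_binomial (r * j\<^sup>2 + a * j)
                              * qbinomial (fps_binomial (2 * k)) N j)"

lemma qsum_Suc:
  "qsum r k (Suc N) a = qsum r k N (a + 2 * k) - fps_binomial (r + a) * qsum r k N (a + 2 * r)"
proof -
  define E where "E = (fps_binomial :: real \<Rightarrow> real fps)"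
  define B where "B = qbinomial (E (2 * k)) N"
  define f where "f a j = (-1) ^ j * E (r * j\<^sup>2 + a * j)" for a :: real and j :: nat
  have E_add: "E (x + y) = E x * E y" for x y
    by (simp add: E_def fps_binomial_add_mult)
  have shift_k: "f a (Suc i) * E (2 * k) ^ Suc i = f (a + 2 * k) (Suc i)" for i
    by (simp add: f_def E_def fps_binomial_power fps_binomial_add_mult[symmetric] algebra_simps)
  have shift_r: "f a (Suc i) = - (E (r + a) * f (a + 2 * r) i)" for i
    by (simp add: f_def E_add[symmetric] algebra_simps power2_eq_square)
  have qsum_eq: "qsum r k N' a' = (\<Sum>j=0..N'. f a' j * qbinomial (E (2 * k)) N' j)" for N' a'
    by (simp add: qsum_def f_def E_def)
  have "qsum r k (Suc N) a = 1 + (\<Sum>i=0..N. f a (Suc i) * (B i + E (2 * k) ^ Suc i * B (Suc i)))"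
    unfolding qsum_eq by (subst sum.atLeast0_atMost_Suc_shift) (simp add: B_def f_def E_def)
  also have "\<dots> = (1 + (\<Sum>i=0..N. f (a + 2 * k) (Suc i) * B (Suc i)))
                  - E (r + a) * (\<Sum>i=0..N. f (a + 2 * r) i * B i)"
  proof -
    have "f a (Suc i) * (B i + E (2 * k) ^ Suc i * B (Suc i))
        = f a (Suc i) * E (2 * k) ^ Suc i * B (Suc i) + f a (Suc i) * B i" for i
      by (simp add: algebra_simps)
    also have "\<dots> i = f (a + 2 * k) (Suc i) * B (Suc i) - E (r + a) * (f (a + 2 * r) i * B i)" for i
      by (simp only: shift_k) (simp add: shift_r)
    finally show ?thesis
      by (simp add: sum_subtractf sum_distrib_left)
  qed
  also have "1 + (\<Sum>i=0..N. f (a + 2 * k) (Suc i) * B (Suc i))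
      = (\<Sum>j=0..Suc N. f (a + 2 * k) j * B j)"
    by (subst sum.atLeast0_atMost_Suc_shift) (simp add: f_def B_def E_def)
  also have "\<dots> = qsum r k N (a + 2 * k)"
    by (simp add: qsum_eq B_def qbinomial_eq_0)
  finally show ?thesis
    by (simp add: qsum_eq B_def E_def)
qed

lemma qsum_symmetric:
  assumes "k \<ge> 1"
  shows "qsum r k N a = (-1) ^ N * fps_binomial (r * N\<^sup>2 + a * N) * qsum r k N (- 2 * r * N - a)"
proof -
  define E where "E = (fps_binomial :: real \<Rightarrow> real fps)"
  define B where "B = qbinomial (E (2 * k)) N"
  define e where "e j = r * N\<^sup>2 + a * N + (r * j\<^sup>2 + (- 2 * r * N - a) * j)" for j :: real
  have "(-1) ^ N * E (r * N\<^sup>2 + a * N) * qsum r k N (- 2 * r * N - a)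
      = (\<Sum>j=0..N. (-1) ^ (N + j) * E (e j) * B j)"
    by (simp add: qsum_def sum_distrib_left power_add e_def E_def B_def fps_binomial_add_mult mult_ac)
  also have "\<dots> = (\<Sum>j=0..N. (-1) ^ (N + (N - j)) * E (e (N - j)) * B (N - j))"
    by (subst sum.atLeastAtMost_rev) simp
  also have "\<dots> = (\<Sum>j=0..N. (-1) ^ j * E (r * j\<^sup>2 + a * j) * B j)"
  proof (rule sum.cong)
    fix j
    assume "j \<in> {0..N}"
    then have j: "j \<le> N" by simp
    have "N + (N - j) = j + 2 * (N - j)"
      using j by simp
    then have "(-1::real fps) ^ (N + (N - j)) = (-1) ^ j"
      by (simp only: power_add power_mult) simp
    moreover have "e (N - j) = r * j\<^sup>2 + a * j"
      using j by (simp add: e_def of_nat_diff power2_eq_square algebra_simps)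
    moreover have "B (N - j) = B j"
      using qbinomial_fps_binomial_symmetric[OF assms j] by (simp add: B_def E_def)
    ultimately show "(-1) ^ (N + (N - j)) * E (e (N - j)) * B (N - j)
        = (-1) ^ j * E (r * j\<^sup>2 + a * j) * B j"
      by simp
  qed simp
  finally show ?thesis
    by (simp add: qsum_def E_def B_def)
qed

definition qsum_poly :: "nat \<Rightarrow> nat \<Rightarrow> nat \<Rightarrow> real poly fps" where
  "qsum_poly r k N = (\<Sum>j=0..N. (-1) ^ j * binomial_series [:r * j\<^sup>2, j:]
                                * const_coeffs (qbinomial (fps_binomial (2 * k)) N j))"

lemma eval_qsum_poly [simp]: "eval_coeffs a (qsum_poly r k N) = qsum r k N a"
  unfolding qsum_poly_def qsum_def eval_coeffs_sum by (rule sum.cong) (simp_all add: mult.commute)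

lemma qsum_poly_0: "qsum_poly r k 0 = 1"
  by (rule eval_coeffs_inject) (simp add: qsum_def)

lemma qsum_poly_Suc:
  "qsum_poly r k (Suc N) = shift_coeffs (2 * k) (qsum_poly r k N)
                           - binomial_series [:r, 1:] * shift_coeffs (2 * r) (qsum_poly r k N)"
  by (rule eval_coeffs_inject) (simp add: qsum_Suc add.commute)

lemma qsum_poly_symmetric:
  assumes "k \<ge> 1"
  shows "qsum_poly r k N
           = (-1) ^ N * binomial_series [:r * N\<^sup>2, N:] * reflect_coeffs (- 2 * r * N) (qsum_poly r k N)"
    (is "?lhs = ?rhs")
proof (rule eval_coeffs_inject)
  fix a
  show "eval_coeffs a ?lhs = eval_coeffs a ?rhs"
    using qsum_symmetric[OF assms, of r N a] by (simp add: mult.commute)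
qed

lemma qsum_poly_Suc_split:
  "qsum_poly r k (Suc N)
     = (shift_coeffs (2 * k) (qsum_poly r k N) - shift_coeffs (2 * r) (qsum_poly r k N))
       + (1 - binomial_series [:r, 1:]) * shift_coeffs (2 * r) (qsum_poly r k N)"
  by (simp add: qsum_poly_Suc algebra_simps)

lemma has_weight_qsum_poly: "has_weight N (qsum_poly r k N)"
proof (induction N)
  case 0
  then show ?case
    by (simp add: qsum_poly_0 has_weight_one)
next
  case (Suc N)
  have "has_weight (1 + N) ((1 - binomial_series [:r, 1:]) * shift_coeffs (2 * r) (qsum_poly r k N))"
    by (intro has_weight_mult has_weight_one_minus_binomial_series has_weight_shift_coeffs Suc.IH)
  then show ?case
    unfolding qsum_poly_Suc_split
    by (intro has_weight_add has_weight_shift_coeffs_diff Suc.IH) simp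
qed

lemma top_part_qsum_poly: "top_part N (qsum_poly r k N) $ i = top_coeff (real k - real r) N i"
proof (induction N arbitrary: i)
  case 0
  then show ?case
    by (simp add: qsum_poly_0 top_part_nth top_coeff_0)
next
  case (Suc N)
  let ?P = "qsum_poly r k N"
  have "top_part (Suc N) ((1 - binomial_series [:r, 1:]) * shift_coeffs (2 * r) ?P)
      = - fps_X * top_part N ?P"
  proof -
    have "top_part (1 + N) ((1 - binomial_series [:r, 1:]) * shift_coeffs (2 * r) ?P)
        = top_part 1 (1 - binomial_series [:r, 1:]) * top_part N (shift_coeffs (2 * r) ?P)"
      by (intro top_part_mult has_weight_one_minus_binomial_series has_weight_shift_coeffs
          has_weight_qsum_poly)
    also have "\<dots> = - fps_X * top_part N ?P"
      by (simp only: top_part_one_minus_binomial_series top_part_shift_coeffs has_weight_qsum_poly)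
    finally show ?thesis
      by simp
  qed
  then have "top_part (Suc N) (qsum_poly r k (Suc N)) $ i
      = top_part (Suc N) (shift_coeffs (2 * k) ?P - shift_coeffs (2 * r) ?P) $ i
        - (fps_X * top_part N ?P) $ i"
    unfolding qsum_poly_Suc_split top_part_add by simp
  also have "\<dots> = top_coeff (real k - real r) (Suc N) i"
    by (simp add: top_part_shift_coeffs_diff_nth has_weight_qsum_poly fps_X_mult_nth Suc.IH
        top_coeff_Suc algebra_simps)
  finally show ?case .
qed

lemma qsum_nth_eq_0: "2 * i < N \<Longrightarrow> qsum r k N a $ i = 0"
  using has_weight_nth_eq_0[OF has_weight_qsum_poly] eval_qsum_poly
  by (metis eval_coeffs_nth poly_0)

lemma qsum_even_central: "qsum r k (2 * n) a $ n = top_coeff (real k - real r) (2 * n) n"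
proof -
  have "degree (qsum_poly r k (2 * n) $ n) = 0"
    using has_weight_degree[OF has_weight_qsum_poly, of r k "2 * n" n] by simp
  then obtain c where c: "qsum_poly r k (2 * n) $ n = [:c:]"
    by (metis degree_eq_zeroE)
  have "qsum r k (2 * n) a $ n = c"
    by (simp add: c flip: eval_qsum_poly)
  also have "c = top_part (2 * n) (qsum_poly r k (2 * n)) $ n"
    by (simp add: top_part_nth c)
  finally show ?thesis
    by (simp add: top_part_qsum_poly)
qed

lemma qsum_odd_central:
  assumes "k \<ge> 1"
  shows "qsum r k (2 * n + 1) a $ (n + 1)
           = top_coeff (real k - real r) (2 * n + 1) (n + 1) * (real r * real (2 * n + 1) + a)"
proof -
  define N where "N = 2 * n + 1"
  define F where "F = qsum_poly r k N"
  define c where "c = - 2 * real r * real N"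
  define P where "P = F $ (n + 1)"
  have P: "P = [:coeff P 0, coeff P 1:]"
    using has_weight_degree[OF has_weight_qsum_poly, of r k N "n + 1"]
    by (intro degree_le_1_imp_eq_pCons) (simp add: P_def F_def N_def)
  define B where "B = binomial_series [:r * N\<^sup>2, N:]"
  define R where "R = reflect_coeffs c F"
  have F_eq: "F = - (B * R)"
    using qsum_poly_symmetric[OF assms, of r N] by (simp add: F_def N_def c_def B_def R_def)
  have R_low: "R $ (n - l) = 0" for l
    using has_weight_nth_eq_0[OF has_weight_qsum_poly, of "n - l" N r k]
    by (simp add: R_def reflect_coeffs_def F_def N_def)
  have "P = - (\<Sum>l=0..Suc n. B $ l * R $ (Suc n - l))"
    unfolding P_def by (subst F_eq) (simp only: fps_neg_nth fps_mult_nth Suc_eq_plus1)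
  also have "\<dots> = - R $ (n + 1)"
    by (subst sum.atLeast0_atMost_Suc_shift) (simp add: R_low B_def)
  finally have "P = - R $ (n + 1)" .
  then have "P = - pcompose P [:c, -1:]"
    by (simp add: R_def reflect_coeffs_def P_def)
  then have "poly P 0 = poly (- pcompose P [:c, -1:]) 0"
    by (rule arg_cong)
  then have "poly P 0 = - poly P c"
    by (simp add: poly_pcompose)
  then have "coeff P 0 = real r * real N * coeff P 1"
    by (subst (asm) (1 2) P) (simp add: c_def algebra_simps)
  moreover have "coeff P 1 = top_coeff (real k - real r) N (n + 1)"
    using top_part_qsum_poly[of N r k "n + 1"] by (simp add: top_part_nth P_def F_def N_def)
  moreover have "qsum r k N a $ (n + 1) = poly P a"
    by (simp add: P_def F_def flip: eval_qsum_poly)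
  ultimately show ?thesis
    by (subst (asm) P) (simp add: N_def algebra_simps)
qed

section \<open>The limit at q = -1\<close>

definition shifted_numerator :: "nat \<Rightarrow> nat \<Rightarrow> nat \<Rightarrow> nat \<Rightarrow> real poly" where
  "shifted_numerator r m k N = (\<Sum>j=0..N. (-1) ^ j * [:1, 1:] ^ (r * j\<^sup>2 + m * j)
                                            * qbinomial ([:1, 1:] ^ (2 * k)) N j)"

lemma coeff_shifted_numerator: "coeff (shifted_numerator r m k N) i = qsum r k N m $ i"
proof -
  have "fps_of_poly (shifted_numerator r m k N) = qsum r k N m"
    unfolding shifted_numerator_def qsum_def fps_of_poly_sum
  proof (rule sum.cong)
    fix j
    have "fps_binomial (real r * (real j)\<^sup>2 + real m * real j)
        = fps_of_poly ([:1, 1:] ^ (r * j\<^sup>2 + m * j))"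
      using fps_binomial_of_nat_eq_fps_of_poly[of "r * j\<^sup>2 + m * j"] by simp
    moreover have "fps_binomial (2 * real k) = fps_of_poly ([:1, 1:] ^ (2 * k))"
      using fps_binomial_of_nat_eq_fps_of_poly[of "2 * k"] by simp
    ultimately show "fps_of_poly ((-1) ^ j * [:1, 1:] ^ (r * j\<^sup>2 + m * j)
                                    * qbinomial ([:1, 1:] ^ (2 * k)) N j)
        = (-1) ^ j * fps_binomial (real r * (real j)\<^sup>2 + real m * real j)
            * qbinomial (fps_binomial (2 * real k)) N j"
      by (simp add: fps_of_poly_mult fps_of_poly_power fps_of_poly_uminus fps_of_poly_qbinomial)
  qed simp
  then show ?thesis
    by (metis fps_of_poly_nth)
qed

lemma neg_one_power_quadratic:
  assumes "odd (r + m)"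
  shows "(-1::'a::ring_1) ^ (r * j\<^sup>2 + m * j) = (-1) ^ j"
proof -
  have "even (r * j\<^sup>2 + m * j) \<longleftrightarrow> even j"
    using assms by (auto simp: even_add even_mult_iff)
  then show ?thesis
    by (simp add: minus_one_power_iff)
qed

lemma numerator_eq_poly_shifted_numerator:
  assumes "odd (r + m)" "k \<ge> 1" "t > -1" "t \<noteq> 0"
  shows "(\<Sum>j=0..N. (-(1 + t)) ^ (r * j\<^sup>2 + m * j) * gauss_binom ((-(1 + t)) ^ (2 * k)) N j)
           = poly (shifted_numerator r m k N) t"
proof -
  define p where "p = (1 + t) ^ (2 * k)"
  have "0 < p"
    using assms(3) by (simp add: p_def)
  moreover have "p \<noteq> 1"
  proof
    assume "p = 1"
    then have "norm (1 + t) = 1 \<or> 2 * k = 0"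
      unfolding p_def by (rule power_eq_1_iff)
    then show False
      using assms(2-4) by auto
  qed
  moreover have "(-(1 + t)) ^ (2 * k) = p"
    by (simp add: p_def power_minus_even del: minus_add_distrib)
  moreover have "(-(1 + t)) ^ (r * j\<^sup>2 + m * j) = (-1) ^ j * (1 + t) ^ (r * j\<^sup>2 + m * j)" for j
    by (simp only: power_minus[of "1 + t"] neg_one_power_quadratic[OF assms(1)])
  ultimately show ?thesis
    unfolding shifted_numerator_def poly_sum
    by (intro sum.cong) (simp_all add: gauss_binom_eq_qbinomial poly_qbinomial add.commute
        del: minus_add_distrib flip: p_def)
qed

definition denominator_factor :: "nat \<Rightarrow> real \<Rightarrow> real" where
  "denominator_factor s t = (if odd s then - (\<Sum>i<s. (1 + t) ^ i) else 1 + (1 + t) ^ s)"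

lemma one_plus_power_eq_denominator_factor: "1 + (-(1 + t)) ^ s = (if odd s then t else 1) * denominator_factor s t"
proof (cases "odd s")
  case True
  have "(1 + t) ^ s - 1 ^ s = ((1 + t) - 1) * (\<Sum>i<s. 1 ^ (s - Suc i) * (1 + t) ^ i)"
    by (rule power_diff_sumr2)
  moreover have "(-(1 + t)) ^ s = - ((1 + t) ^ s)"
    by (rule power_minus_odd[OF True])
  ultimately show ?thesis
    using True by (simp add: denominator_factor_def algebra_simps)
next
  case False
  then have "(-(1 + t)) ^ s = (1 + t) ^ s"
    by (simp add: power_minus_even del: minus_add_distrib)
  with False show ?thesis
    by (simp add: denominator_factor_def)
qed

lemma isCont_denominator_factor: "isCont (denominator_factor s) t"
  by (cases "odd s") (simp_all add: denominator_factor_def [abs_def] continuous_intros)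

definition reduced_denominator :: "nat \<Rightarrow> real \<Rightarrow> real" where
  "reduced_denominator N t = (\<Prod>j<N. denominator_factor (Suc j) t)"

lemma qpoch_eq_reduced_denominator:
  "qpoch (1 + t) (-(1 + t)) N = t ^ ((N + 1) div 2) * reduced_denominator N t"
proof -
  have odd_count: "(\<Prod>j<N. if odd (Suc j) then t else 1) = t ^ ((N + 1) div 2)"
    by (induction N) (auto simp: power_Suc mult.commute)
  have "qpoch (1 + t) (-(1 + t)) N = (\<Prod>j<N. 1 + (-(1 + t)) ^ Suc j)"
    by (simp add: qpoch_def algebra_simps)
  also have "\<dots> = (\<Prod>j<N. (if odd (Suc j) then t else 1) * denominator_factor (Suc j) t)"
    by (simp only: one_plus_power_eq_denominator_factor)
  finally show ?thesis
    by (simp only: prod.distrib odd_count reduced_denominator_def)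
qed

lemma isCont_reduced_denominator: "isCont (reduced_denominator N) t"
  unfolding reduced_denominator_def by (intro continuous_intros isCont_denominator_factor)

lemma reduced_denominator_0_nonzero: "reduced_denominator N 0 \<noteq> 0"
  by (simp add: reduced_denominator_def denominator_factor_def)

lemma reduced_denominator_0_even: "reduced_denominator (2 * n) 0 = (-1) ^ n * fact (2 * n) / fact n"
proof (induction n)
  case (Suc n)
  have "reduced_denominator (2 * Suc n) 0 = reduced_denominator (2 * n) 0 * (- (2 * real n + 1)) * 2"
    by (simp add: reduced_denominator_def denominator_factor_def)
  also have "\<dots> = (-1) ^ Suc n * ((2 * real n + 2) * ((2 * real n + 1) * fact (2 * n)))
                      / ((real n + 1) * fact n)"
    by (simp add: Suc.IH divide_simps) (simp add: algebra_simps)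
  also have "\<dots> = (-1) ^ Suc n * fact (2 * Suc n) / fact (Suc n)"
    by (simp add: fact_Suc algebra_simps)
  finally show ?case .
qed (simp add: reduced_denominator_def)

lemma reduced_denominator_0_odd:
  "reduced_denominator (Suc (2 * n)) 0 = (-1) ^ Suc n * fact (2 * n + 1) / fact n"
proof -
  have "reduced_denominator (Suc (2 * n)) 0 = reduced_denominator (2 * n) 0 * (- (2 * real n + 1))"
    by (simp add: reduced_denominator_def denominator_factor_def)
  also have "\<dots> = (-1) ^ Suc n * fact (2 * n + 1) / fact n"
    by (simp only: reduced_denominator_0_even) (simp add: fact_Suc field_simps)
  finally show ?thesis .
qed

lemma top_coeff_central: "top_coeff h N ((N + 1) div 2) = h ^ (N div 2) * reduced_denominator N 0"
proof (cases "even N")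
  case True
  then obtain n where "N = 2 * n"
    by blast
  then show ?thesis
    by (simp add: top_coeff_def reduced_denominator_0_even)
next
  case False
  then obtain n where "N = 2 * n + 1"
    by (blast elim: oddE)
  then show ?thesis
    by (simp add: top_coeff_def reduced_denominator_0_odd)
qed

lemma tendsto_poly_div_power_at_0:
  fixes p :: "real poly" and g :: "real \<Rightarrow> real"
  assumes low: "\<And>i. i < c \<Longrightarrow> coeff p i = 0" and g: "isCont g 0" "g 0 \<noteq> 0"
  shows "((\<lambda>t. poly p t / (t ^ c * g t)) \<longlongrightarrow> coeff p c / g 0) (at 0)"
proof -
  define p' where "p' = poly_shift c p"
  have "p = monom 1 c * p'"
    by (rule poly_eqI) (simp add: p'_def coeff_monom_mult coeff_poly_shift low)
  then have "poly p t = t ^ c * poly p' t" for t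
    by (simp add: poly_monom)
  then have "\<forall>\<^sub>F t in at 0. poly p' t / g t = poly p t / (t ^ c * g t)"
    by (auto simp: eventually_at_filter)
  moreover have "((\<lambda>t. poly p' t / g t) \<longlongrightarrow> poly p' 0 / g 0) (at 0)"
    using g by (intro tendsto_intros) (auto simp: isCont_def)
  moreover have "poly p' 0 = coeff p c"
    by (simp add: p'_def poly_0_coeff_0 coeff_poly_shift)
  ultimately show ?thesis
    using tendsto_cong by force
qed

lemma qsum_quotient_tendsto:
  fixes r m k N :: nat
  assumes "k \<ge> 1" and "odd (r + m)"
  shows "((\<lambda>q::real. (\<Sum>j=0..N. q ^ (r*j^2 + m*j) * gauss_binom (q ^ (2*k)) N j) / qpoch (-q) q N)
           \<longlongrightarrow> coeff (shifted_numerator r m k N) ((N + 1) div 2) / reduced_denominator N 0) (at (-1))"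
proof -
  define c where "c = (N + 1) div 2"
  define f where "f t = poly (shifted_numerator r m k N) t / (t ^ c * reduced_denominator N t)" for t
  have "(f \<longlongrightarrow> coeff (shifted_numerator r m k N) c / reduced_denominator N 0) (at 0)"
    unfolding f_def
    by (intro tendsto_poly_div_power_at_0 isCont_reduced_denominator reduced_denominator_0_nonzero)
       (simp add: coeff_shifted_numerator qsum_nth_eq_0 c_def)
  moreover have "filterlim (\<lambda>q::real. - q - 1) (at 0) (at (-1))"
    unfolding filterlim_at by (auto simp: eventually_at_filter intro!: tendsto_eq_intros)
  ultimately have
    "((\<lambda>q. f (- q - 1)) \<longlongrightarrow> coeff (shifted_numerator r m k N) c / reduced_denominator N 0) (at (-1))"
    by (rule filterlim_compose)
  moreover have "\<forall>\<^sub>F q in at (-1).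
      f (- q - 1) = (\<Sum>j=0..N. q ^ (r*j^2 + m*j) * gauss_binom (q ^ (2*k)) N j) / qpoch (-q) q N"
    unfolding eventually_at
  proof (intro exI[of _ 1] conjI ballI impI)
    fix q :: real
    assume q: "q \<noteq> -1 \<and> dist q (-1) < 1"
    define t where "t = - q - 1"
    then have "q = -(1 + t)" "t > -1" "t \<noteq> 0"
      using q by (auto simp: dist_real_def)
    then show "f (- q - 1) = (\<Sum>j=0..N. q ^ (r*j^2 + m*j) * gauss_binom (q ^ (2*k)) N j) / qpoch (-q) q N"
      using numerator_eq_poly_shifted_numerator[OF assms(2,1), of t N] qpoch_eq_reduced_denominator[of t N]
      by (simp add: f_def c_def t_def)
  qed simp
  ultimately show ?thesis
    unfolding c_def using tendsto_cong by force
qed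

theorem corollary2p5:
  fixes r m k n :: nat
  assumes "k \<ge> 1" and "odd (r + m)"
  shows "((\<lambda>q::real. (\<Sum>j=0..2*n. q ^ (r*j^2 + m*j) * gauss_binom (q ^ (2*k)) (2*n) j)
            / qpoch (-q) q (2*n))
          \<longlongrightarrow> (real_of_int (int k - int r)) ^ n) (at (-1))
       \<and> ((\<lambda>q::real. (\<Sum>j=0..2*n+1. q ^ (r*j^2 + m*j) * gauss_binom (q ^ (2*k)) (2*n+1) j)
            / qpoch (-q) q (2*n+1))
          \<longlongrightarrow> real ((2*n+1)*r + m) * (real_of_int (int k - int r)) ^ n) (at (-1))"
proof -
  define h where "h = real k - real r"
  have "coeff (shifted_numerator r m k (2 * n)) n / reduced_denominator (2 * n) 0 = h ^ n"
    using top_coeff_central[of h "2 * n"] reduced_denominator_0_nonzero[of "2 * n"]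
    by (simp add: coeff_shifted_numerator qsum_even_central h_def)
  moreover have "coeff (shifted_numerator r m k (2 * n + 1)) (n + 1) / reduced_denominator (2 * n + 1) 0
      = real ((2 * n + 1) * r + m) * h ^ n"
    using top_coeff_central[of h "2 * n + 1"] reduced_denominator_0_nonzero[of "2 * n + 1"]
      qsum_odd_central[OF assms(1), of r n m]
    by (simp add: coeff_shifted_numerator h_def field_simps)
  ultimately show ?thesis
    using qsum_quotient_tendsto[OF assms, of "2 * n"] qsum_quotient_tendsto[OF assms, of "2 * n + 1"]
    by (simp add: h_def)
qed

end
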